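(* Let $H$ be a weak Hopf algebra. The category ${}_H\mathbf{parMod}$ of partial $H$-modules is isomorphic to the category ${}_{{H_{par}^w}}\mathbf{Mod}$ of left modules over ${H_{par}^w}$.
   Context: All algebras are associative and unital over a field $\Bbbk$; Sweedler notation $\Delta(h)=h_1\otimes h_2$. A weak Hopf algebra is $(H,m,u,\Delta,\varepsilon,S)$ with $H$ an algebra, $(H,\Delta,\varepsilon)$ a coalgebra, and for all $g,h,k$: $\Delta(kh)=\Delta(k)\Delta(h)$; $\varepsilon(kh_1)\varepsilon(h_2g)=\varepsilon(khg)=\varepsilon(kh_2)\varepsilon(h_1g)$; $(1\otimes\Delta(1))(\Delta(1)\otimes1)=\Delta^2(1)=(\Delta(1)\otimes1)(1\otimes\Delta(1))$; $h_1S(h_2)=\varepsilon(1_1h)1_2$; $S(h_1)h_2=1_1\varepsilon(h1_2)$; $S(h)=S(h_1)h_2S(h_3)$, where $\Delta(1)=1_1\otimes1_2$. ${H_{par}^w}=T(H)/I$, where $T(H)$ is the tensor algebra of the vector space $H$ and $I$ is the ideal generated by, for all $h,k\in H$: $1_H-1_{T(H)}$; $h\otimes k_1\otimes S(k_2)-hk_1\otimes S(k_2)$; $h\otimes S(k_1)\otimes k_2-hS(k_1)\otimes k_2$; $h_1\otimes S(h_2)\otimes k-h_1\otimes S(h_2)k$; $S(h_1)\otimes h_2\otimes k-S(h_1)\otimes h_2k$; $h-h_1\otimes S(h_2)\otimes h_3$. A partial $H$-module is a vector space $M$ with a linear map $\bullet\colon H\otimes M\to M$ such that for all $m\in M$,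 $h,k\in H$: $1_H\bullet m=m$; $h\bullet(k_1\bullet(S(k_2)\bullet m))=hk_1\bullet(S(k_2)\bullet m)$; $h\bullet(S(k_1)\bullet(k_2\bullet m))=hS(k_1)\bullet(k_2\bullet m)$; $h_1\bullet(S(h_2)\bullet(k\bullet m))=h_1\bullet(S(h_2)k\bullet m)$; $S(h_1)\bullet(h_2\bullet(k\bullet m))=S(h_1)\bullet(h_2k\bullet m)$; $h_1\bullet(S(h_2)\bullet(h_3\bullet m))=h\bullet m$. Morphisms of partial $H$-modules are linear maps $f$ with $f(h\bullet m)=h\bullet f(m)$. *)

theory Defs
  imports Complex_Main "HOL-Library.Function_Algebras"
begin

text \<open>Elements of the free k-vector space on words (lists) of elements of H are
finitely supported functions 'h list => 'k.  The n-th tensor power of H is the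
quotient of the span of words of length n by the multilinearity relations; the
tensor algebra T(H) is the quotient of the whole free space by these relations.\<close>

definition fdelta :: "'h list \<Rightarrow> ('h list \<Rightarrow> 'k::zero_neq_one)" where
  "fdelta w = (\<lambda>v. if v = w then 1 else 0)"

definition fscale :: "'k::times \<Rightarrow> ('h list \<Rightarrow> 'k) \<Rightarrow> ('h list \<Rightarrow> 'k)" where
  "fscale c f = (\<lambda>w. c * f w)"

definition fsupp :: "('h list \<Rightarrow> 'k::zero) \<Rightarrow> 'h list set" where
  "fsupp f = {w. f w \<noteq> 0}"

definition Free :: "('h list \<Rightarrow> 'k::zero) set" where
  "Free = {f. finite (fsupp f)}"

text \<open>Elements supported on words of length 2 (representatives of elements of H (x) H).\<close>
definition Free2 :: "('h list \<Rightarrow> 'k::zero) set" where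
  "Free2 = {f \<in> Free. \<forall>w \<in> fsupp f. length w = 2}"

definition lsum :: "('k \<Rightarrow> 'v \<Rightarrow> 'v) \<Rightarrow> ('h list \<Rightarrow> 'v::comm_monoid_add) \<Rightarrow> ('h list \<Rightarrow> 'k::zero) \<Rightarrow> 'v" where
  "lsum sc G f = (\<Sum>w\<in>fsupp f. sc (f w) (G w))"

definition on2 :: "('h \<Rightarrow> 'h \<Rightarrow> 'v::zero) \<Rightarrow> 'h list \<Rightarrow> 'v" where
  "on2 F w = (case w of [a, b] \<Rightarrow> F a b | _ \<Rightarrow> 0)"

definition on3 :: "('h \<Rightarrow> 'h \<Rightarrow> 'h \<Rightarrow> 'v::zero) \<Rightarrow> 'h list \<Rightarrow> 'v" where
  "on3 F w = (case w of [a, b, c] \<Rightarrow> F a b c | _ \<Rightarrow> 0)"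

text \<open>Concatenation product (the tensor product of tensors; the product of T(H)).\<close>
definition conv :: "('h list \<Rightarrow> 'k::comm_ring_1) \<Rightarrow> ('h list \<Rightarrow> 'k) \<Rightarrow> ('h list \<Rightarrow> 'k)" where
  "conv f g = (\<lambda>w. \<Sum>i\<le>length w. f (take i w) * g (drop i w))"

text \<open>Componentwise product (the algebra structure of the tensor powers of H).\<close>
definition cmul :: "('h::times list \<Rightarrow> 'k::comm_ring_1) \<Rightarrow> ('h list \<Rightarrow> 'k) \<Rightarrow> ('h list \<Rightarrow> 'k)" where
  "cmul f g = lsum fscale (\<lambda>u. lsum fscale (\<lambda>v. fdelta (map2 (*) u v)) g) f"

inductive_set lspan :: "('h list \<Rightarrow> 'k::comm_ring_1) set \<Rightarrow> ('h list \<Rightarrow> 'k) set"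
  for S where
    lspan_zero: "0 \<in> lspan S"
  | lspan_step: "x \<in> lspan S \<Longrightarrow> g \<in> S \<Longrightarrow> x + fscale c g \<in> lspan S"

text \<open>Multilinearity relations (sH is the scalar multiplication of H).\<close>
definition linrel :: "('k::field \<Rightarrow> 'h::ring_1 \<Rightarrow> 'h) \<Rightarrow> ('h list \<Rightarrow> 'k) set" where
  "linrel sH =
     {fdelta (u @ [a + b] @ v) - fdelta (u @ [a] @ v) - fdelta (u @ [b] @ v) | u a b v. True}
   \<union> {fdelta (u @ [sH c a] @ v) - fscale c (fdelta (u @ [a] @ v)) | u c a v. True}"

text \<open>Equality in the tensor powers of H.\<close>
definition teq :: "('k::field \<Rightarrow> 'h::ring_1 \<Rightarrow> 'h) \<Rightarrow> ('h list \<Rightarrow> 'k) \<Rightarrow> ('h list \<Rightarrow> 'k) \<Rightarrow> bool" where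
  "teq sH x y \<longleftrightarrow> x - y \<in> lspan (linrel sH)"

definition ideal_gen :: "('h list \<Rightarrow> 'k::comm_ring_1) set \<Rightarrow> ('h list \<Rightarrow> 'k) set" where
  "ideal_gen S = lspan {conv (conv (fdelta u) g) (fdelta v) | u g v. g \<in> S}"

text \<open>(Delta (x) id) Delta h, i.e. h_1 (x) h_2 (x) h_3.\<close>
definition D2 :: "('h \<Rightarrow> ('h list \<Rightarrow> 'k::comm_ring_1)) \<Rightarrow> 'h \<Rightarrow> ('h list \<Rightarrow> 'k)" where
  "D2 \<Delta> h = lsum fscale (on2 (\<lambda>a b. conv (\<Delta> a) (fdelta [b]))) (\<Delta> h)"

definition weak_hopf_algebra ::
  "('k::field \<Rightarrow> 'h::ring_1 \<Rightarrow> 'h) \<Rightarrow> ('h \<Rightarrow> ('h list \<Rightarrow> 'k)) \<Rightarrow> ('h \<Rightarrow> 'k) \<Rightarrow> ('h \<Rightarrow> 'h) \<Rightarrow> bool" where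
  "weak_hopf_algebra sH \<Delta> \<epsilon> S \<longleftrightarrow>
     \<comment> \<open>H is a k-algebra\<close>
     vector_space sH
   \<and> (\<forall>c x y. sH c (x * y) = sH c x * y \<and> sH c (x * y) = x * sH c y)
   \<comment> \<open>(H, Delta, epsilon) is a coalgebra\<close>
   \<and> (\<forall>h. \<Delta> h \<in> Free2)
   \<and> (\<forall>x y. teq sH (\<Delta> (x + y)) (\<Delta> x + \<Delta> y))
   \<and> (\<forall>c x. teq sH (\<Delta> (sH c x)) (fscale c (\<Delta> x)))
   \<and> Vector_Spaces.linear sH (*) \<epsilon>
   \<and> (\<forall>h. teq sH (D2 \<Delta> h) (lsum fscale (on2 (\<lambda>a b. conv (fdelta [a]) (\<Delta> b))) (\<Delta> h)))
   \<and> (\<forall>h. teq sH (lsum fscale (on2 (\<lambda>a b. fscale (\<epsilon> a) (fdelta [b]))) (\<Delta> h)) (fdelta [h]))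
   \<and> (\<forall>h. teq sH (lsum fscale (on2 (\<lambda>a b. fscale (\<epsilon> b) (fdelta [a]))) (\<Delta> h)) (fdelta [h]))
   \<comment> \<open>S is linear\<close>
   \<and> Vector_Spaces.linear sH sH S
   \<comment> \<open>weak Hopf axioms\<close>
   \<and> (\<forall>k h. teq sH (\<Delta> (k * h)) (cmul (\<Delta> k) (\<Delta> h)))
   \<and> (\<forall>k h g. lsum (*) (on2 (\<lambda>a b. \<epsilon> (k * a) * \<epsilon> (b * g))) (\<Delta> h) = \<epsilon> (k * h * g)
            \<and> \<epsilon> (k * h * g) = lsum (*) (on2 (\<lambda>a b. \<epsilon> (k * b) * \<epsilon> (a * g))) (\<Delta> h))
   \<and> teq sH (cmul (conv (fdelta [1]) (\<Delta> 1)) (conv (\<Delta> 1) (fdelta [1]))) (D2 \<Delta> 1)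
   \<and> teq sH (D2 \<Delta> 1) (cmul (conv (\<Delta> 1) (fdelta [1])) (conv (fdelta [1]) (\<Delta> 1)))
   \<and> (\<forall>h. lsum sH (on2 (\<lambda>a b. a * S b)) (\<Delta> h) = lsum sH (on2 (\<lambda>a b. sH (\<epsilon> (a * h)) b)) (\<Delta> 1))
   \<and> (\<forall>h. lsum sH (on2 (\<lambda>a b. S a * b)) (\<Delta> h) = lsum sH (on2 (\<lambda>a b. sH (\<epsilon> (h * b)) a)) (\<Delta> 1))
   \<and> (\<forall>h. S h = lsum sH (on3 (\<lambda>a b c. S a * b * S c)) (D2 \<Delta> h))"

text \<open>Lifts to the free algebra of the generators of the ideal I.\<close>
definition parrels :: "('h::ring_1 \<Rightarrow> ('h list \<Rightarrow> 'k::comm_ring_1)) \<Rightarrow> ('h \<Rightarrow> 'h) \<Rightarrow> ('h list \<Rightarrow> 'k) set" where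
  "parrels \<Delta> S =
     {fdelta [1] - fdelta []}
   \<union> {lsum fscale (on2 (\<lambda>a b. fdelta [h, a, S b] - fdelta [h * a, S b])) (\<Delta> k) | h k. True}
   \<union> {lsum fscale (on2 (\<lambda>a b. fdelta [h, S a, b] - fdelta [h * S a, b])) (\<Delta> k) | h k. True}
   \<union> {lsum fscale (on2 (\<lambda>a b. fdelta [a, S b, k] - fdelta [a, S b * k])) (\<Delta> h) | h k. True}
   \<union> {lsum fscale (on2 (\<lambda>a b. fdelta [S a, b, k] - fdelta [S a, b * k])) (\<Delta> h) | h k. True}
   \<union> {fdelta [h] - lsum fscale (on3 (\<lambda>a b c. fdelta [a, S b, c])) (D2 \<Delta> h) | h. True}"

text \<open>The ideal of the free algebra whose quotient is H_par^w
  (preimage of I under the projection from the free algebra onto T(H)).\<close>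
definition Jpar where
  "Jpar sH \<Delta> S = ideal_gen (linrel sH \<union> parrels \<Delta> S)"

definition cls :: "('h list \<Rightarrow> 'k::comm_ring_1) set \<Rightarrow> ('h list \<Rightarrow> 'k) \<Rightarrow> ('h list \<Rightarrow> 'k) set" where
  "cls J x = {y \<in> Free. x - y \<in> J}"

definition Hpar where
  "Hpar sH \<Delta> S = cls (Jpar sH \<Delta> S) ` Free"

definition rep :: "'a set \<Rightarrow> 'a" where "rep X = (SOME x. x \<in> X)"

definition qadd where "qadd J X Y = cls J (rep X + rep Y)"
definition qscale where "qscale J c X = cls J (fscale c (rep X))"
definition qmul where "qmul J X Y = cls J (conv (rep X) (rep Y))"
definition qone where "qone J = cls J (fdelta [])"

definition par_alg_module ::
  "('k::field \<Rightarrow> 'h::ring_1 \<Rightarrow> 'h) \<Rightarrow> ('h \<Rightarrow> ('h list \<Rightarrow> 'k)) \<Rightarrow> ('h \<Rightarrow> 'h)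
   \<Rightarrow> ('k \<Rightarrow> 'm::ab_group_add \<Rightarrow> 'm) \<Rightarrow> (('h list \<Rightarrow> 'k) set \<Rightarrow> 'm \<Rightarrow> 'm) \<Rightarrow> bool" where
  "par_alg_module sH \<Delta> S sM act \<longleftrightarrow>
     (let J = Jpar sH \<Delta> S; A = Hpar sH \<Delta> S in
       (\<forall>X. X \<notin> A \<longrightarrow> act X = (\<lambda>_. undefined))
     \<and> (\<forall>X\<in>A. Vector_Spaces.linear sM sM (act X))
     \<and> (\<forall>X\<in>A. \<forall>Y\<in>A. \<forall>m. act (qadd J X Y) m = act X m + act Y m)
     \<and> (\<forall>c. \<forall>X\<in>A. \<forall>m. act (qscale J c X) m = sM c (act X m))
     \<and> (\<forall>X\<in>A. \<forall>Y\<in>A. \<forall>m. act (qmul J X Y) m = act X (act Y m))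
     \<and> (\<forall>m. act (qone J) m = m))"

definition par_alg_module_hom where
  "par_alg_module_hom sH \<Delta> S sM sN act act' f \<longleftrightarrow>
     Vector_Spaces.linear sM sN f
   \<and> (\<forall>X\<in>Hpar sH \<Delta> S. \<forall>m. f (act X m) = act' X (f m))"

definition partial_module ::
  "('k::field \<Rightarrow> 'h::ring_1 \<Rightarrow> 'h) \<Rightarrow> ('h \<Rightarrow> ('h list \<Rightarrow> 'k)) \<Rightarrow> ('h \<Rightarrow> 'h)
   \<Rightarrow> ('k \<Rightarrow> 'm::ab_group_add \<Rightarrow> 'm) \<Rightarrow> ('h \<Rightarrow> 'm \<Rightarrow> 'm) \<Rightarrow> bool" where
  "partial_module sH \<Delta> S sM act \<longleftrightarrow>
     \<comment> \<open>the action is a linear map H (x) M \<rightarrow> M, i.e. bilinear\<close>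
     (\<forall>h. Vector_Spaces.linear sM sM (act h))
   \<and> (\<forall>m. Vector_Spaces.linear sH sM (\<lambda>h. act h m))
   \<and> (\<forall>m. act 1 m = m)
   \<and> (\<forall>h k m. lsum sM (on2 (\<lambda>a b. act h (act a (act (S b) m)))) (\<Delta> k)
             = lsum sM (on2 (\<lambda>a b. act (h * a) (act (S b) m))) (\<Delta> k))
   \<and> (\<forall>h k m. lsum sM (on2 (\<lambda>a b. act h (act (S a) (act b m)))) (\<Delta> k)
             = lsum sM (on2 (\<lambda>a b. act (h * S a) (act b m))) (\<Delta> k))
   \<and> (\<forall>h k m. lsum sM (on2 (\<lambda>a b. act a (act (S b) (act k m)))) (\<Delta> h)
             = lsum sM (on2 (\<lambda>a b. act a (act (S b * k) m))) (\<Delta> h))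
   \<and> (\<forall>h k m. lsum sM (on2 (\<lambda>a b. act (S a) (act b (act k m)))) (\<Delta> h)
             = lsum sM (on2 (\<lambda>a b. act (S a) (act (b * k) m))) (\<Delta> h))
   \<and> (\<forall>h m. lsum sM (on3 (\<lambda>a b c. act a (act (S b) (act c m)))) (D2 \<Delta> h) = act h m)"

definition partial_module_hom where
  "partial_module_hom sM sN act act' f \<longleftrightarrow>
     Vector_Spaces.linear sM sN f \<and> (\<forall>h m. f (act h m) = act' h (f m))"

text \<open>The functor from H_par^w-modules to partial H-modules: restriction along
  H \<rightarrow> H_par^w, h \<mapsto> [h]; it is the identity on underlying spaces and maps.\<close>
definition to_partial where
  "to_partial sH \<Delta> S act = (\<lambda>h m. act (cls (Jpar sH \<Delta> S) (fdelta [h])) m)"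

end

theory Submission
  imports Defs
begin

text \<open>A left module over H_par^w = T(H)/I is the same as a representation of the free algebra
  on the set H that kills the preimage J of I. A representation of the free algebra is determined
  by an arbitrary map P from H to the endomorphisms of M, the word [h1, ..., hn] acting as
  P h1 \<circ> ... \<circ> P hn, and it kills J iff it kills the generators of J. Killing a multilinearity
  relation means that P is linear in h, and killing a defining relation of H_par^w is literally
  one axiom of a partial H-module. So restriction to one-letter words is a bijection, and since
  one-letter words generate H_par^w, a linear map commutes with both actions iff it commutes with
  the restricted ones. Only the vector space structure of H enters, not the weak Hopf axioms.\<close>

section \<open>The free vector space on words\<close>

lemma sum_fun_apply: "sum F A x = (\<Sum>a\<in>A. F a x)"
  by (induct A rule: infinite_finite_induct) auto

lemma fsupp_fdelta [simp]: "fsupp (fdelta w :: 'h list \<Rightarrow> 'k::zero_neq_one) = {w}"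
  by (auto simp: fsupp_def fdelta_def)

lemma Free_fdelta [simp]: "fdelta w \<in> Free"
  by (simp add: Free_def)

lemma Free_zero [simp]: "0 \<in> Free"
  by (simp add: Free_def fsupp_def)

lemma Free_add [simp]:
  assumes "(f :: 'h list \<Rightarrow> 'k::monoid_add) \<in> Free" "g \<in> Free"
  shows "f + g \<in> Free"
proof -
  have "fsupp (f + g) \<subseteq> fsupp f \<union> fsupp g" by (auto simp: fsupp_def)
  with assms show ?thesis unfolding Free_def by (auto intro: finite_subset)
qed

lemma Free_uminus [simp]: "(f :: 'h list \<Rightarrow> 'k::ab_group_add) \<in> Free \<Longrightarrow> - f \<in> Free"
  unfolding Free_def fsupp_def by simp

lemma Free_diff [simp]:
  "(f :: 'h list \<Rightarrow> 'k::ab_group_add) \<in> Free \<Longrightarrow> g \<in> Free \<Longrightarrow> f - g \<in> Free"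
  using Free_add[of f "- g"] by simp

lemma Free_fscale [simp]:
  assumes "(f :: 'h list \<Rightarrow> 'k::mult_zero) \<in> Free"
  shows "fscale c f \<in> Free"
proof -
  have "fsupp (fscale c f) \<subseteq> fsupp f" by (auto simp: fsupp_def fscale_def)
  with assms show ?thesis unfolding Free_def by (auto intro: finite_subset)
qed

lemma Free_sum: "(\<And>a. a \<in> A \<Longrightarrow> F a \<in> Free) \<Longrightarrow> sum F A \<in> Free"
  by (induct A rule: infinite_finite_induct) auto

lemma fscale_zero: "fscale c 0 = (0 :: 'h list \<Rightarrow> 'k::mult_zero)"
  by (simp add: fscale_def fun_eq_iff)

lemma fscale_diff: "fscale c (f - g) = fscale c f - fscale c (g :: 'h list \<Rightarrow> 'k::comm_ring_1)"
  by (simp add: fscale_def fun_eq_iff algebra_simps)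

lemma fscale_minus_one: "fscale (-1) f = - (f :: 'h list \<Rightarrow> 'k::comm_ring_1)"
  by (simp add: fscale_def fun_eq_iff)

lemma fscale_sum: "fscale (c :: 'k::comm_ring_1) (sum F A) = (\<Sum>a\<in>A. fscale c (F a))"
  by (simp add: fscale_def fun_eq_iff sum_fun_apply sum_distrib_left)

lemma Free_decomp:
  assumes "f \<in> Free"
  shows "f = (\<Sum>w\<in>fsupp f. fscale (f w) (fdelta w :: 'h list \<Rightarrow> 'k::comm_ring_1))"
proof
  fix v
  have "(\<Sum>w\<in>fsupp f. fscale (f w) (fdelta w) v) = (\<Sum>w\<in>fsupp f. if w = v then f w else 0)"
    by (rule sum.cong) (auto simp: fscale_def fdelta_def)
  also have "\<dots> = f v" using assms by (simp add: sum.delta' Free_def fsupp_def)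
  finally show "f v = (\<Sum>w\<in>fsupp f. fscale (f w) (fdelta w)) v"
    by (simp add: sum_fun_apply)
qed

lemma lsum_superset:
  assumes "module sc" "finite A" "fsupp f \<subseteq> A"
  shows "lsum sc G f = (\<Sum>w\<in>A. sc (f w) (G w))"
  unfolding lsum_def
  by (rule sum.mono_neutral_left) (use assms in \<open>auto simp: fsupp_def module.scale_zero_left\<close>)

lemma lsum_zero: "lsum sc G 0 = 0"
  by (simp add: lsum_def fsupp_def)

lemma lsum_fdelta: "module sc \<Longrightarrow> lsum sc G (fdelta w) = G w"
  unfolding lsum_def fsupp_fdelta by (simp add: fdelta_def module.scale_one)

lemma lsum_add:
  assumes "module sc" "f \<in> Free" "g \<in> Free"
  shows "lsum sc G (f + g) = lsum sc G f + lsum sc G g"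
proof -
  let ?A = "fsupp f \<union> fsupp g"
  have "finite ?A" "fsupp (f + g) \<subseteq> ?A" using assms by (auto simp: Free_def fsupp_def)
  then show ?thesis using assms
    by (simp add: lsum_superset[of sc ?A] module.scale_left_distrib sum.distrib)
qed

lemma lsum_fscale:
  assumes "module sc" "f \<in> Free"
  shows "lsum sc G (fscale c f) = sc c (lsum sc G f)"
proof -
  have "finite (fsupp f)" "fsupp (fscale c f) \<subseteq> fsupp f"
    using assms by (auto simp: Free_def fsupp_def fscale_def)
  then show ?thesis using assms
    by (simp add: lsum_superset[of sc "fsupp f"] fscale_def module.scale_sum_right module.scale_scale)
qed

lemma lsum_diff:
  assumes "module sc" "f \<in> Free" "g \<in> Free"
  shows "lsum sc G (f - g) = lsum sc G f - lsum sc G g"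
proof -
  have "lsum sc G (- g) = - lsum sc G g"
    using lsum_fscale[OF assms(1,3), of G "-1"] assms(1)
    by (simp add: fscale_minus_one module.scale_minus_left module.scale_one)
  then show ?thesis using lsum_add[OF assms(1,2), of "- g" G] assms by simp
qed

lemma lsum_sum:
  assumes "module sc" "\<And>a. a \<in> A \<Longrightarrow> F a \<in> Free"
  shows "lsum sc G (sum F A) = (\<Sum>a\<in>A. lsum sc G (F a))"
  using assms(2)
proof (induct A rule: infinite_finite_induct)
  case (insert x X)
  have "lsum sc G (F x + sum F X) = lsum sc G (F x) + lsum sc G (sum F X)"
    using insert by (intro lsum_add[OF assms(1)]) (auto intro: Free_sum)
  with insert show ?case by (simp only: sum.insert[OF insert(1,2)]) simp
qed (auto simp: lsum_zero)

lemma lsum_distrib: "module sc \<Longrightarrow> lsum sc (\<lambda>w. G1 w + G2 w) f = lsum sc G1 f + lsum sc G2 f"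
  by (simp add: lsum_def module.scale_right_distrib sum.distrib)

lemma lsum_subtractf: "module sc \<Longrightarrow> lsum sc (\<lambda>w. G1 w - G2 w) f = lsum sc G1 f - lsum sc G2 f"
  by (simp add: lsum_def module.scale_right_diff_distrib sum_subtractf)

lemma lsum_hom:
  fixes \<phi> :: "'v::ab_group_add \<Rightarrow> 'w::ab_group_add"
  assumes "\<And>x y. \<phi> (x + y) = \<phi> x + \<phi> y" "\<And>c x. \<phi> (sc c x) = sc' c (\<phi> x)"
  shows "\<phi> (lsum sc G f) = lsum sc' (\<lambda>w. \<phi> (G w)) f"
proof -
  interpret additive \<phi> by standard (rule assms(1))
  show ?thesis by (simp add: lsum_def sum assms(2))
qed

lemma Free_linear_eq_lsum:
  assumes "module sc" "x \<in> Free"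
    and add: "\<And>x y. x \<in> Free \<Longrightarrow> y \<in> Free \<Longrightarrow> \<phi> (x + y) = \<phi> x + \<phi> y"
    and scale: "\<And>c x. x \<in> Free \<Longrightarrow> \<phi> (fscale c x) = sc c (\<phi> x)"
  shows "\<phi> x = lsum sc (\<lambda>w. \<phi> (fdelta w)) x"
proof -
  have "\<phi> 0 = 0"
    using scale[of 0 0] assms(1) by (simp add: fscale_zero module.scale_zero_left)
  then have "\<phi> (\<Sum>w\<in>A. fscale (x w) (fdelta w)) = (\<Sum>w\<in>A. sc (x w) (\<phi> (fdelta w)))" for A
    by (induct A rule: infinite_finite_induct) (simp_all add: add Free_sum scale)
  then show ?thesis
    using Free_decomp[OF assms(2)] by (metis lsum_def)
qed

lemma on2_Free: "(\<And>a b. F a b \<in> Free) \<Longrightarrow> on2 F w \<in> Free"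
  unfolding on2_def by (simp split: list.split)

lemma on3_Free: "(\<And>a b c. F a b c \<in> Free) \<Longrightarrow> on3 F w \<in> Free"
  unfolding on3_def by (simp split: list.split)

lemma lsum_Free:
  fixes F :: "'a list \<Rightarrow> ('h list \<Rightarrow> 'k::comm_ring_1)"
  shows "(\<And>w. F w \<in> Free) \<Longrightarrow> lsum fscale F f \<in> Free"
  unfolding lsum_def by (intro Free_sum Free_fscale) auto

lemma on2_map: "g 0 = 0 \<Longrightarrow> g (on2 F w) = on2 (\<lambda>a b. g (F a b)) w"
  unfolding on2_def by (simp split: list.split)

lemma on3_map: "g 0 = 0 \<Longrightarrow> g (on3 F w) = on3 (\<lambda>a b c. g (F a b c)) w"
  unfolding on3_def by (simp split: list.split)

lemma conv_add_left: "conv (f + g) h = conv f h + conv g (h :: 'h list \<Rightarrow> 'k::comm_ring_1)"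
  by (rule ext) (simp add: conv_def algebra_simps sum.distrib)

lemma conv_add_right: "conv h (f + g) = conv h f + conv h (g :: 'h list \<Rightarrow> 'k::comm_ring_1)"
  by (rule ext) (simp add: conv_def algebra_simps sum.distrib)

lemma conv_diff_left: "conv (f - g) h = conv f h - conv g (h :: 'h list \<Rightarrow> 'k::comm_ring_1)"
  by (rule ext) (simp add: conv_def algebra_simps sum_subtractf)

lemma conv_diff_right: "conv h (f - g) = conv h f - conv h (g :: 'h list \<Rightarrow> 'k::comm_ring_1)"
  by (rule ext) (simp add: conv_def algebra_simps sum_subtractf)

lemma conv_fscale_left: "conv (fscale c f) g = fscale c (conv f (g :: 'h list \<Rightarrow> 'k::comm_ring_1))"
  by (rule ext) (simp add: conv_def fscale_def sum_distrib_left algebra_simps)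

lemma conv_fscale_right: "conv f (fscale c g) = fscale c (conv f (g :: 'h list \<Rightarrow> 'k::comm_ring_1))"
  by (rule ext) (simp add: conv_def fscale_def sum_distrib_left algebra_simps)

lemma conv_sum_left: "conv (sum F A) g = (\<Sum>a\<in>A. conv (F a) (g :: 'h list \<Rightarrow> 'k::comm_ring_1))"
  by (rule ext) (simp add: conv_def sum_fun_apply sum_distrib_right flip: sum.swap[of _ A])

lemma conv_sum_right: "conv g (sum F A) = (\<Sum>a\<in>A. conv g (F a :: 'h list \<Rightarrow> 'k::comm_ring_1))"
  by (rule ext) (simp add: conv_def sum_fun_apply sum_distrib_left flip: sum.swap[of _ A])

lemma conv_fdelta: "conv (fdelta u) (fdelta v) = (fdelta (u @ v) :: 'h list \<Rightarrow> 'k::comm_ring_1)"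
proof
  fix w :: "'h list"
  have "(fdelta u (take i w) :: 'k) * fdelta v (drop i w)
      = (if i = length u \<and> w = u @ v then 1 else 0)" if "i \<le> length w" for i
    using that by (auto simp: fdelta_def)
  then show "conv (fdelta u) (fdelta v) w = (fdelta (u @ v) w :: 'k)"
    by (simp add: conv_def fdelta_def)
qed

lemma conv_fdelta_Nil_left: "conv (fdelta []) g = (g :: 'h list \<Rightarrow> 'k::comm_ring_1)"
proof
  fix w
  have "conv (fdelta []) g w = (\<Sum>i\<le>length w. if i = 0 then g w else 0)"
    unfolding conv_def by (rule sum.cong) (auto simp: fdelta_def)
  then show "conv (fdelta []) g w = g w" by simp
qed

lemma conv_fdelta_Nil_right: "conv g (fdelta []) = (g :: 'h list \<Rightarrow> 'k::comm_ring_1)"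
proof
  fix w
  have "conv g (fdelta []) w = (\<Sum>i\<le>length w. if i = length w then g w else 0)"
    unfolding conv_def by (rule sum.cong) (auto simp: fdelta_def)
  then show "conv g (fdelta []) w = g w" by simp
qed

lemma Free_conv [simp]:
  fixes f g :: "'h list \<Rightarrow> 'k::comm_ring_1"
  assumes "f \<in> Free" "g \<in> Free"
  shows "conv f g \<in> Free"
proof -
  have "fsupp (conv f g) \<subseteq> (\<lambda>(u, v). u @ v) ` (fsupp f \<times> fsupp g)"
  proof
    fix w assume "w \<in> fsupp (conv f g)"
    then obtain i where "f (take i w) * g (drop i w) \<noteq> 0"
      unfolding fsupp_def conv_def by (auto elim: sum.not_neutral_contains_not_neutral)
    then have "(take i w, drop i w) \<in> fsupp f \<times> fsupp g" by (auto simp: fsupp_def)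
    then show "w \<in> (\<lambda>(u, v). u @ v) ` (fsupp f \<times> fsupp g)"
      by (metis (no_types, lifting) append_take_drop_id case_prod_conv image_eqI)
  qed
  with assms show ?thesis unfolding Free_def by (auto intro: finite_subset)
qed

lemma conv_assoc:
  fixes f g h :: "'h list \<Rightarrow> 'k::comm_ring_1"
  assumes "f \<in> Free" "g \<in> Free" "h \<in> Free"
  shows "conv (conv f g) h = conv f (conv g h)"
proof -
  have "conv (conv (\<Sum>a\<in>A. fscale (x a) (fdelta a)) (\<Sum>b\<in>B. fscale (y b) (fdelta b)))
          (\<Sum>c\<in>C. fscale (z c) (fdelta c))
      = conv (\<Sum>a\<in>A. fscale (x a) (fdelta a))
          (conv (\<Sum>b\<in>B. fscale (y b) (fdelta b)) (\<Sum>c\<in>C. fscale (z c) (fdelta c)))"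
    for A B C and x y z :: "'h list \<Rightarrow> 'k"
    by (simp only: conv_sum_left conv_sum_right conv_fscale_left conv_fscale_right conv_fdelta
        fscale_sum append_assoc)
  from this[of f "fsupp f" g "fsupp g" h "fsupp h"] show ?thesis
    by (simp only: Free_decomp[OF assms(1), symmetric] Free_decomp[OF assms(2), symmetric]
        Free_decomp[OF assms(3), symmetric])
qed

lemma lspan_add:
  assumes "x \<in> lspan T" "y \<in> lspan T"
  shows "x + y \<in> lspan T"
  using assms(2)
proof (induct rule: lspan.induct)
  case (lspan_step y g c)
  then have "(x + y) + fscale c g \<in> lspan T" by (intro lspan.lspan_step)
  then show ?case by (simp add: add.assoc plus_fun_def)
qed (simp add: assms(1))

lemma lspan_fscale: "x \<in> lspan T \<Longrightarrow> fscale c x \<in> lspan T"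
proof (induct x rule: lspan.induct)
  case lspan_zero
  show ?case by (simp only: fscale_zero lspan.lspan_zero)
next
  case (lspan_step y g d)
  then have "fscale c y + fscale (c * d) g \<in> lspan T" by (intro lspan.lspan_step)
  then show ?case by (simp add: fscale_def algebra_simps plus_fun_def)
qed

lemma lspan_base: "g \<in> T \<Longrightarrow> g \<in> lspan T"
  using lspan.lspan_step[OF lspan.lspan_zero, of g T 1] by (simp add: fscale_def)

lemma lspan_diff: "x \<in> lspan T \<Longrightarrow> y \<in> lspan T \<Longrightarrow> x - y \<in> lspan T"
  using lspan_add[of x T "fscale (-1) y"] lspan_fscale[of y T "-1"] by (simp add: fscale_minus_one)

lemma lspan_sum: "(\<And>a. a \<in> A \<Longrightarrow> F a \<in> lspan T) \<Longrightarrow> sum F A \<in> lspan T"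
  by (induct A rule: infinite_finite_induct) (auto intro: lspan.lspan_zero lspan_add)

lemma lspan_Free: "x \<in> lspan T \<Longrightarrow> T \<subseteq> Free \<Longrightarrow> x \<in> Free"
  by (induct rule: lspan.induct) auto

lemma lspan_linear_image:
  assumes "x \<in> lspan T"
    and add: "\<And>x y. \<phi> (x + y) = \<phi> x + \<phi> y"
    and scale: "\<And>c x. \<phi> (fscale c x) = fscale c (\<phi> x)"
    and base: "\<And>g. g \<in> T \<Longrightarrow> \<phi> g \<in> lspan T"
  shows "\<phi> x \<in> lspan T"
  using assms(1)
proof (induct rule: lspan.induct)
  case lspan_zero
  have "fscale 0 x = 0" for x :: "'a list \<Rightarrow> 'b" by (simp add: fscale_def fun_eq_iff)
  then have "\<phi> 0 = 0" using scale[of 0 0] by (simp add: fscale_zero)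
  then show ?case by (simp add: lspan.lspan_zero flip: zero_fun_def)
next
  case (lspan_step y g c)
  then have "\<phi> y + fscale c (\<phi> g) \<in> lspan T" by (simp add: lspan_add lspan_fscale base)
  \<comment> \<open>the induction rule of lspan states the step pointwise\<close>
  moreover have "(\<lambda>a. y a + fscale c g a) = y + fscale c g" by (simp add: plus_fun_def)
  ultimately show ?case by (simp only: add scale)
qed

definition word_multiples :: "('h list \<Rightarrow> 'k::comm_ring_1) set \<Rightarrow> ('h list \<Rightarrow> 'k) set" where
  "word_multiples R = {conv (conv (fdelta u) g) (fdelta v) | u g v. g \<in> R}"

lemma ideal_gen_eq_lspan: "ideal_gen R = lspan (word_multiples R)"
  by (simp add: ideal_gen_def word_multiples_def)

lemma word_multiples_Free: "R \<subseteq> Free \<Longrightarrow> word_multiples R \<subseteq> Free"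
  by (auto simp: word_multiples_def)

lemma ideal_gen_base: "g \<in> R \<Longrightarrow> (g :: 'h list \<Rightarrow> 'k::comm_ring_1) \<in> ideal_gen R"
proof -
  assume "g \<in> R"
  then have "conv (conv (fdelta []) g) (fdelta []) \<in> word_multiples R"
    unfolding word_multiples_def by blast
  then show ?thesis
    unfolding ideal_gen_eq_lspan by (simp add: lspan_base conv_fdelta_Nil_left conv_fdelta_Nil_right)
qed

lemma word_multiples_conv_fdelta:
  assumes "R \<subseteq> Free" "g \<in> word_multiples (R :: ('h list \<Rightarrow> 'k::comm_ring_1) set)"
  shows "conv g (fdelta w) \<in> word_multiples R" and "conv (fdelta w) g \<in> word_multiples R"
proof -
  obtain u r v where g: "g = conv (conv (fdelta u) r) (fdelta v)" and r: "r \<in> R"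
    using assms(2) unfolding word_multiples_def by blast
  have "r \<in> Free" using r assms(1) by blast
  then have "conv g (fdelta w) = conv (conv (fdelta u) r) (fdelta (v @ w))"
    and "conv (fdelta w) g = conv (conv (fdelta (w @ u)) r) (fdelta v)"
    unfolding g conv_fdelta[symmetric] by (simp_all only: conv_assoc Free_conv Free_fdelta)
  then show "conv g (fdelta w) \<in> word_multiples R" and "conv (fdelta w) g \<in> word_multiples R"
    using r unfolding word_multiples_def by blast+
qed

lemma ideal_gen_conv:
  assumes R: "R \<subseteq> Free" and j: "j \<in> ideal_gen (R :: ('h list \<Rightarrow> 'k::comm_ring_1) set)"
    and f: "f \<in> Free"
  shows "conv j f \<in> ideal_gen R" and "conv f j \<in> ideal_gen R"
proof -
  have right: "conv j (fdelta w) \<in> lspan (word_multiples R)" for w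
    using j unfolding ideal_gen_eq_lspan
    by (rule lspan_linear_image[where \<phi>="\<lambda>x. conv x (fdelta w)"])
      (simp_all add: conv_add_left conv_fscale_left lspan_base word_multiples_conv_fdelta[OF R])
  have left: "conv (fdelta w) j \<in> lspan (word_multiples R)" for w
    using j unfolding ideal_gen_eq_lspan
    by (rule lspan_linear_image[where \<phi>="conv (fdelta w)"])
      (simp_all add: conv_add_right conv_fscale_right lspan_base word_multiples_conv_fdelta[OF R])
  have "conv j f = (\<Sum>w\<in>fsupp f. fscale (f w) (conv j (fdelta w)))"
    by (subst Free_decomp[OF f]) (simp only: conv_sum_right conv_fscale_right)
  then show "conv j f \<in> ideal_gen R"
    unfolding ideal_gen_eq_lspan by (simp add: lspan_sum lspan_fscale right)
  have "conv f j = (\<Sum>w\<in>fsupp f. fscale (f w) (conv (fdelta w) j))"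
    by (subst Free_decomp[OF f]) (simp only: conv_sum_left conv_fscale_left)
  then show "conv f j \<in> ideal_gen R"
    unfolding ideal_gen_eq_lspan by (simp add: lspan_sum lspan_fscale left)
qed

locale free_quotient =
  fixes R :: "('h list \<Rightarrow> 'k::field) set"
  assumes R_Free: "R \<subseteq> Free"
begin

abbreviation "J \<equiv> ideal_gen R"

lemma J_zero: "0 \<in> J"
  unfolding ideal_gen_eq_lspan by (rule lspan.lspan_zero)

lemma J_add: "x \<in> J \<Longrightarrow> y \<in> J \<Longrightarrow> x + y \<in> J"
  unfolding ideal_gen_eq_lspan by (rule lspan_add)

lemma J_diff: "x \<in> J \<Longrightarrow> y \<in> J \<Longrightarrow> x - y \<in> J"
  unfolding ideal_gen_eq_lspan by (rule lspan_diff)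

lemma J_fscale: "x \<in> J \<Longrightarrow> fscale c x \<in> J"
  unfolding ideal_gen_eq_lspan by (rule lspan_fscale)

lemma J_minus_commute: "x - y \<in> J \<Longrightarrow> y - x \<in> J"
  using J_diff[OF J_zero] by (metis diff_0 minus_diff_eq)

lemma cls_eq:
  assumes "x \<in> Free" "y \<in> Free" "x - y \<in> J"
  shows "cls J x = cls J y"
proof -
  have "x - z \<in> J \<longleftrightarrow> y - z \<in> J" for z
  proof
    assume "x - z \<in> J"
    from J_diff[OF this assms(3)] show "y - z \<in> J" by (simp add: algebra_simps)
  next
    assume "y - z \<in> J"
    from J_add[OF this assms(3)] show "x - z \<in> J" by (simp add: algebra_simps)
  qed
  then show ?thesis by (auto simp: cls_def)
qed

lemma rep_cls:
  assumes "x \<in> Free"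
  shows "rep (cls J x) \<in> Free" "x - rep (cls J x) \<in> J"
proof -
  have "x \<in> cls J x" using assms by (simp add: cls_def J_zero)
  then have "rep (cls J x) \<in> cls J x" unfolding rep_def by (metis someI)
  then show "rep (cls J x) \<in> Free" "x - rep (cls J x) \<in> J" by (auto simp: cls_def)
qed

lemma qadd_cls:
  assumes "x \<in> Free" "y \<in> Free"
  shows "qadd J (cls J x) (cls J y) = cls J (x + y)"
  unfolding qadd_def
proof (rule cls_eq)
  have "(x - rep (cls J x)) + (y - rep (cls J y)) \<in> J"
    using rep_cls(2) assms by (intro J_add)
  then have "x + y - (rep (cls J x) + rep (cls J y)) \<in> J"
    by (simp add: algebra_simps)
  then show "rep (cls J x) + rep (cls J y) - (x + y) \<in> J"
    by (rule J_minus_commute)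
qed (use assms rep_cls in auto)

lemma qscale_cls:
  assumes "x \<in> Free"
  shows "qscale J c (cls J x) = cls J (fscale c x)"
  unfolding qscale_def
proof (rule cls_eq)
  have "fscale c x - fscale c (rep (cls J x)) \<in> J"
    using J_fscale[OF rep_cls(2)[OF assms]] by (simp only: fscale_diff)
  then show "fscale c (rep (cls J x)) - fscale c x \<in> J"
    by (rule J_minus_commute)
qed (use assms rep_cls in auto)

lemma qmul_cls:
  assumes "x \<in> Free" "y \<in> Free"
  shows "qmul J (cls J x) (cls J y) = cls J (conv x y)"
  unfolding qmul_def
proof (rule cls_eq)
  let ?rx = "rep (cls J x)" and ?ry = "rep (cls J y)"
  have "conv (x - ?rx) ?ry + conv x (y - ?ry) \<in> J"
    using rep_cls[OF assms(1)] rep_cls[OF assms(2)] assms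
    by (intro J_add ideal_gen_conv[OF R_Free])
  moreover have "conv (x - ?rx) ?ry + conv x (y - ?ry) = conv x y - conv ?rx ?ry"
    unfolding conv_diff_left conv_diff_right by (simp add: algebra_simps)
  ultimately show "conv ?rx ?ry - conv x y \<in> J"
    by (intro J_minus_commute[of "conv x y"]) simp
qed (use assms rep_cls in auto)

end

section \<open>Representations of the free algebra\<close>

definition free_action ::
  "('k::zero \<Rightarrow> 'm \<Rightarrow> 'm) \<Rightarrow> ('h \<Rightarrow> 'm \<Rightarrow> 'm) \<Rightarrow> ('h list \<Rightarrow> 'k) \<Rightarrow> 'm \<Rightarrow> ('m::ab_group_add)" where
  "free_action sM P x m = lsum sM (\<lambda>w. foldr P w m) x"

lemma free_action_zero: "free_action sM P 0 m = 0"
  by (simp add: free_action_def lsum_zero)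

lemma free_action_on2: "free_action sM P (on2 F w) m = on2 (\<lambda>a b. free_action sM P (F a b) m) w"
  by (rule on2_map[where g="\<lambda>x. free_action sM P x m", OF free_action_zero])

lemma free_action_on3: "free_action sM P (on3 F w) m = on3 (\<lambda>a b c. free_action sM P (F a b c) m) w"
  by (rule on3_map[where g="\<lambda>x. free_action sM P x m", OF free_action_zero])

lemma free_action_hom:
  assumes "Vector_Spaces.linear sM sN f" and commute: "\<And>h m. f (P h m) = P' h (f m)"
  shows "f (free_action sM P x m) = free_action sN P' x (f m)"
proof -
  have "f (foldr P w m) = foldr P' w (f m)" for w m
    by (induct w arbitrary: m) (simp_all add: commute)
  moreover have "f (free_action sM P x m) = lsum sN (\<lambda>w. f (foldr P w m)) x"
    unfolding free_action_def
    by (rule lsum_hom) (use assms(1) in \<open>simp_all add: Vector_Spaces.linear_iff\<close>)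
  ultimately show ?thesis
    by (simp add: free_action_def)
qed

locale linear_action =
  fixes sM :: "'k::field \<Rightarrow> 'm::ab_group_add \<Rightarrow> 'm" and P :: "'h \<Rightarrow> 'm \<Rightarrow> 'm"
  assumes vector_space_sM: "vector_space sM"
    and linear_P: "\<And>h. Vector_Spaces.linear sM sM (P h)"
begin

interpretation M: vector_space sM by (rule vector_space_sM)

lemma module_sM: "module sM"
  using vector_space_sM by (simp add: module_iff_vector_space)

lemma foldr_add: "foldr P w (a + b) = foldr P w a + foldr P w b"
  by (induct w) (use linear_P in \<open>simp_all add: Vector_Spaces.linear_iff\<close>)

lemma foldr_scale: "foldr P w (sM c a) = sM c (foldr P w a)"
  by (induct w) (use linear_P in \<open>simp_all add: Vector_Spaces.linear_iff\<close>)

lemma foldr_zero: "foldr P w 0 = 0"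
  using foldr_scale[of w 0 0] by simp

lemma free_action_add:
  "x \<in> Free \<Longrightarrow> y \<in> Free \<Longrightarrow>
    free_action sM P (x + y) m = free_action sM P x m + free_action sM P y m"
  unfolding free_action_def by (rule lsum_add[OF module_sM])

lemma free_action_fscale:
  "x \<in> Free \<Longrightarrow> free_action sM P (fscale c x) m = sM c (free_action sM P x m)"
  unfolding free_action_def by (rule lsum_fscale[OF module_sM])

lemma free_action_diff:
  "x \<in> Free \<Longrightarrow> y \<in> Free \<Longrightarrow>
    free_action sM P (x - y) m = free_action sM P x m - free_action sM P y m"
  unfolding free_action_def by (rule lsum_diff[OF module_sM])

lemma free_action_fdelta: "free_action sM P (fdelta w) m = foldr P w m"
  unfolding free_action_def by (rule lsum_fdelta[OF module_sM])

lemma free_action_sum: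
  "(\<And>a. a \<in> A \<Longrightarrow> F a \<in> Free) \<Longrightarrow>
    free_action sM P (sum F A) m = (\<Sum>a\<in>A. free_action sM P (F a) m)"
  unfolding free_action_def by (rule lsum_sum[OF module_sM])

lemma free_action_lsum:
  assumes "\<And>w. F w \<in> Free"
  shows "free_action sM P (lsum fscale F f) m = lsum sM (\<lambda>w. free_action sM P (F w) m) f"
  unfolding lsum_def[of fscale] using assms by (simp add: free_action_sum free_action_fscale lsum_def)

lemma free_action_linear: "Vector_Spaces.linear sM sM (free_action sM P x)"
proof -
  have "free_action sM P x (a + b) = free_action sM P x a + free_action sM P x b" for a b
    unfolding free_action_def foldr_add by (rule lsum_distrib[OF module_sM])
  moreover have "free_action sM P x (sM c a) = sM c (free_action sM P x a)" for c a
    unfolding free_action_def foldr_scale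
    by (rule lsum_hom[symmetric]) (simp_all add: M.scale_right_distrib M.scale_left_commute)
  ultimately show ?thesis
    unfolding Vector_Spaces.linear_iff using vector_space_sM by blast
qed

lemma free_action_conv:
  assumes "f \<in> Free" "g \<in> Free"
  shows "free_action sM P (conv f g) m = free_action sM P f (free_action sM P g m)"
proof -
  have "foldr P u (free_action sM P g m) = free_action sM P (conv (fdelta u) g) m" for u
  proof -
    have "conv (fdelta u) g = (\<Sum>v\<in>fsupp g. fscale (g v) (fdelta (u @ v)))"
      by (subst Free_decomp[OF assms(2)]) (simp only: conv_sum_right conv_fscale_right conv_fdelta)
    moreover have "foldr P u (free_action sM P g m) = lsum sM (\<lambda>v. foldr P u (foldr P v m)) g"
      unfolding free_action_def
      by (rule lsum_hom) (simp_all add: foldr_add foldr_scale)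
    ultimately show ?thesis
      by (simp add: free_action_sum free_action_fscale free_action_fdelta lsum_def)
  qed
  moreover have "conv f g = (\<Sum>u\<in>fsupp f. fscale (f u) (conv (fdelta u) g))"
    by (subst Free_decomp[OF assms(1)]) (simp only: conv_sum_left conv_fscale_left)
  ultimately show ?thesis
    using assms(2) by (simp add: free_action_sum free_action_fscale free_action_def[of _ _ f] lsum_def)
qed

lemma free_action_on2_diff:
  "free_action sM P (lsum fscale (on2 (\<lambda>a b. fdelta (F a b) - fdelta (G a b))) f) m
   = lsum sM (on2 (\<lambda>a b. foldr P (F a b) m)) f - lsum sM (on2 (\<lambda>a b. foldr P (G a b) m)) f"
proof -
  have "free_action sM P (on2 (\<lambda>a b. fdelta (F a b) - fdelta (G a b)) w) m
      = on2 (\<lambda>a b. foldr P (F a b) m) w - on2 (\<lambda>a b. foldr P (G a b) m) w" for w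
    by (simp add: free_action_on2 free_action_diff free_action_fdelta free_action_zero on2_def split: list.split)
  then show ?thesis
    by (simp add: free_action_lsum on2_Free lsum_subtractf[OF module_sM])
qed

lemma free_action_on3_diff:
  "free_action sM P (fdelta [h] - lsum fscale (on3 (\<lambda>a b c. fdelta (F a b c))) f) m
   = P h m - lsum sM (on3 (\<lambda>a b c. foldr P (F a b c) m)) f"
proof -
  have "free_action sM P (on3 (\<lambda>a b c. fdelta (F a b c)) w) m = on3 (\<lambda>a b c. foldr P (F a b c) m) w" for w
    by (simp add: free_action_on3 free_action_fdelta free_action_zero on3_def split: list.split)
  then show ?thesis
    by (simp add: free_action_diff free_action_fdelta free_action_lsum lsum_Free on3_Free)
qed

lemma free_action_ideal_gen:
  assumes "R \<subseteq> Free" and kills: "\<And>r m. r \<in> R \<Longrightarrow> free_action sM P r m = 0"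
    and "j \<in> ideal_gen R"
  shows "free_action sM P j m = 0"
  using assms(3) unfolding ideal_gen_eq_lspan
proof (induct arbitrary: m rule: lspan.induct)
  case lspan_zero
  show ?case by (rule free_action_zero)
next
  case (lspan_step y g c)
  obtain u r v where g: "g = conv (conv (fdelta u) r) (fdelta v)" and r: "r \<in> R"
    using lspan_step(3) unfolding word_multiples_def by blast
  have "r \<in> Free" using r assms(1) by blast
  then have "free_action sM P g m = foldr P u (free_action sM P r (foldr P v m))"
    unfolding g by (simp add: free_action_conv free_action_fdelta)
  then have "free_action sM P g m = 0"
    by (simp add: kills[OF r] foldr_zero)
  moreover have "y \<in> Free" "g \<in> Free"
    using lspan_step(1,3) word_multiples_Free[OF assms(1)] by (auto intro: lspan_Free)
  moreover have "(\<lambda>a. y a + fscale c g a) = y + fscale c g" by (simp add: plus_fun_def)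
  ultimately show ?case
    using lspan_step(2) by (simp add: free_action_add free_action_fscale)
qed

end

section \<open>Partial modules are the representations killing the relations\<close>

lemma kills_linrel_iff:
  fixes P :: "'h::ring_1 \<Rightarrow> 'm::ab_group_add \<Rightarrow> 'm"
  assumes "linear_action sM P"
  shows "(\<forall>r\<in>linrel sH. \<forall>m. free_action sM P r m = 0)
     \<longleftrightarrow> (\<forall>a b m. P (a + b) m = P a m + P b m) \<and> (\<forall>c a m. P (sH c a) m = sM c (P a m))"
proof -
  interpret linear_action sM P by fact
  show ?thesis
  proof (intro iffI conjI allI)
    fix a b m
    assume kills: "\<forall>r\<in>linrel sH. \<forall>m. free_action sM P r m = 0"
    have "fdelta ([] @ [a + b] @ []) - fdelta ([] @ [a] @ []) - fdelta ([] @ [b] @ []) \<in> linrel sH"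
      unfolding linrel_def by blast
    with kills have "P (a + b) m - P a m - P b m = 0"
      by (force simp: free_action_diff free_action_fdelta)
    then show "P (a + b) m = P a m + P b m"
      by (simp add: algebra_simps)
  next
    fix c a m
    assume kills: "\<forall>r\<in>linrel sH. \<forall>m. free_action sM P r m = 0"
    have "fdelta ([] @ [sH c a] @ []) - fscale c (fdelta ([] @ [a] @ [])) \<in> linrel sH"
      unfolding linrel_def by blast
    with kills show "P (sH c a) m = sM c (P a m)"
      by (force simp: free_action_diff free_action_fscale free_action_fdelta)
  next
    assume "(\<forall>a b m. P (a + b) m = P a m + P b m) \<and> (\<forall>c a m. P (sH c a) m = sM c (P a m))"
    then show "\<forall>r\<in>linrel sH. \<forall>m. free_action sM P r m = 0"
      unfolding linrel_def
      by (auto simp: free_action_diff free_action_fscale free_action_fdelta foldr_add foldr_scale)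
  qed
qed

lemma kills_parrels_iff:
  fixes P :: "'h::ring_1 \<Rightarrow> 'm::ab_group_add \<Rightarrow> 'm"
  assumes "linear_action sM P"
  shows "(\<forall>r\<in>parrels \<Delta> S. \<forall>m. free_action sM P r m = 0) \<longleftrightarrow>
     (\<forall>m. P 1 m = m)
   \<and> (\<forall>h k m. lsum sM (on2 (\<lambda>a b. P h (P a (P (S b) m)))) (\<Delta> k)
             = lsum sM (on2 (\<lambda>a b. P (h * a) (P (S b) m))) (\<Delta> k))
   \<and> (\<forall>h k m. lsum sM (on2 (\<lambda>a b. P h (P (S a) (P b m)))) (\<Delta> k)
             = lsum sM (on2 (\<lambda>a b. P (h * S a) (P b m))) (\<Delta> k))
   \<and> (\<forall>h k m. lsum sM (on2 (\<lambda>a b. P a (P (S b) (P k m)))) (\<Delta> h)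
             = lsum sM (on2 (\<lambda>a b. P a (P (S b * k) m))) (\<Delta> h))
   \<and> (\<forall>h k m. lsum sM (on2 (\<lambda>a b. P (S a) (P b (P k m)))) (\<Delta> h)
             = lsum sM (on2 (\<lambda>a b. P (S a) (P (b * k) m))) (\<Delta> h))
   \<and> (\<forall>h m. lsum sM (on3 (\<lambda>a b c. P a (P (S b) (P c m)))) (D2 \<Delta> h) = P h m)"
proof -
  interpret linear_action sM P by fact
  show ?thesis
    unfolding parrels_def
    by (simp add: ball_Un imp_ex free_action_diff free_action_fdelta free_action_on2_diff
        free_action_on3_diff eq_commute[where a = "P h m" for h m])
qed

lemma partial_module_iff_kills_relations:
  fixes P :: "'h::ring_1 \<Rightarrow> 'm::ab_group_add \<Rightarrow> 'm"
  assumes "vector_space sH" "linear_action sM P"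
  shows "partial_module sH \<Delta> S sM P
     \<longleftrightarrow> (\<forall>r\<in>linrel sH \<union> parrels \<Delta> S. \<forall>m. free_action sM P r m = 0)"
proof -
  have "(\<forall>m. Vector_Spaces.linear sH sM (\<lambda>h. P h m))
     \<longleftrightarrow> (\<forall>a b m. P (a + b) m = P a m + P b m) \<and> (\<forall>c a m. P (sH c a) m = sM c (P a m))"
    using assms linear_action.vector_space_sM by (auto simp: Vector_Spaces.linear_iff)
  then show ?thesis
    unfolding partial_module_def ball_Un
      kills_linrel_iff[OF assms(2)] kills_parrels_iff[OF assms(2)]
    using linear_action.linear_P[OF assms(2)] by simp
qed

lemma linear_action_if_partial_module:
  "vector_space sM \<Longrightarrow> partial_module sH \<Delta> S sM P \<Longrightarrow> linear_action sM P"
  by (simp add: linear_action_def partial_module_def)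

definition from_partial ::
  "('k::field \<Rightarrow> 'h::ring_1 \<Rightarrow> 'h) \<Rightarrow> ('h \<Rightarrow> ('h list \<Rightarrow> 'k)) \<Rightarrow> ('h \<Rightarrow> 'h)
   \<Rightarrow> ('k \<Rightarrow> 'm::ab_group_add \<Rightarrow> 'm) \<Rightarrow> ('h \<Rightarrow> 'm \<Rightarrow> 'm) \<Rightarrow> (('h list \<Rightarrow> 'k) set \<Rightarrow> 'm \<Rightarrow> 'm)"
  where
  "from_partial sH \<Delta> S sM P X =
     (if X \<in> Hpar sH \<Delta> S then free_action sM P (rep X) else (\<lambda>_. undefined))"

lemma linrel_Free: "linrel sH \<subseteq> Free"
  unfolding linrel_def by auto

lemma parrels_Free: "parrels \<Delta> S \<subseteq> Free"
  unfolding parrels_def by (auto intro!: Free_diff lsum_Free on2_Free on3_Free)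

locale par_quotient =
  fixes sH :: "'k::field \<Rightarrow> 'h::ring_1 \<Rightarrow> 'h"
    and \<Delta> :: "'h \<Rightarrow> ('h list \<Rightarrow> 'k)" and S :: "'h \<Rightarrow> 'h"
  assumes vector_space_sH: "vector_space sH"
begin

sublocale free_quotient "linrel sH \<union> parrels \<Delta> S"
  by unfold_locales (use linrel_Free parrels_Free in blast)

lemma Jpar_eq: "Jpar sH \<Delta> S = J"
  by (simp add: Jpar_def)

lemma Hpar_eq: "Hpar sH \<Delta> S = cls J ` Free"
  by (simp add: Hpar_def Jpar_eq)

lemma cls_in_Hpar: "x \<in> Free \<Longrightarrow> cls J x \<in> Hpar sH \<Delta> S"
  by (simp add: Hpar_eq)

lemma to_partial_eq: "to_partial sH \<Delta> S act h = act (cls J (fdelta [h]))"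
  by (simp add: to_partial_def Jpar_eq)

lemma par_alg_moduleD:
  assumes "par_alg_module sH \<Delta> S sM act"
  shows "X \<notin> Hpar sH \<Delta> S \<Longrightarrow> act X = (\<lambda>_. undefined)"
    and "X \<in> Hpar sH \<Delta> S \<Longrightarrow> Vector_Spaces.linear sM sM (act X)"
    and "X \<in> Hpar sH \<Delta> S \<Longrightarrow> Y \<in> Hpar sH \<Delta> S \<Longrightarrow> act (qadd J X Y) m = act X m + act Y m"
    and "X \<in> Hpar sH \<Delta> S \<Longrightarrow> act (qscale J c X) m = sM c (act X m)"
    and "X \<in> Hpar sH \<Delta> S \<Longrightarrow> Y \<in> Hpar sH \<Delta> S \<Longrightarrow> act (qmul J X Y) m = act X (act Y m)"
    and "act (qone J) m = m"
  using assms unfolding par_alg_module_def Let_def Jpar_eq by blast+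

lemma free_action_cls_rep:
  assumes "vector_space sM" "partial_module sH \<Delta> S sM P" "x \<in> Free"
  shows "free_action sM P (rep (cls J x)) m = free_action sM P x m"
proof -
  interpret linear_action sM P
    using assms(1,2) by (rule linear_action_if_partial_module)
  have "\<forall>r\<in>linrel sH \<union> parrels \<Delta> S. \<forall>m. free_action sM P r m = 0"
    using partial_module_iff_kills_relations vector_space_sH linear_action_axioms assms(2) by blast
  then have "free_action sM P (x - rep (cls J x)) m = 0"
    using free_action_ideal_gen R_Free rep_cls(2)[OF assms(3)] by blast
  then show ?thesis
    using rep_cls(1)[OF assms(3)] assms(3) by (simp add: free_action_diff)
qed

lemma from_partial_cls:
  assumes "vector_space sM" "partial_module sH \<Delta> S sM P" "x \<in> Free"
  shows "from_partial sH \<Delta> S sM P (cls J x) m = free_action sM P x m"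
  using assms by (simp add: from_partial_def cls_in_Hpar free_action_cls_rep)

lemma par_alg_module_from_partial:
  assumes "vector_space sM" "partial_module sH \<Delta> S sM P"
  shows "par_alg_module sH \<Delta> S sM (from_partial sH \<Delta> S sM P)"
proof -
  interpret linear_action sM P
    using assms by (rule linear_action_if_partial_module)
  note act_cls = from_partial_cls[OF assms]
  let ?act = "from_partial sH \<Delta> S sM P"
  have "?act (qadd J X Y) m = ?act X m + ?act Y m"
    and "?act (qmul J X Y) m = ?act X (?act Y m)"
    if "X \<in> Hpar sH \<Delta> S" "Y \<in> Hpar sH \<Delta> S" for X Y m
    using that unfolding Hpar_eq
    by (auto simp: qadd_cls qmul_cls act_cls free_action_add free_action_conv)
  moreover have "?act (qscale J c X) m = sM c (?act X m)" if "X \<in> Hpar sH \<Delta> S" for c X m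
    using that unfolding Hpar_eq by (auto simp: qscale_cls act_cls free_action_fscale)
  moreover have "?act (qone J) m = m" for m
    by (simp add: qone_def act_cls free_action_fdelta)
  ultimately show ?thesis
    unfolding par_alg_module_def Let_def Jpar_eq
    by (simp add: from_partial_def free_action_linear)
qed

lemma to_partial_from_partial:
  assumes "vector_space sM" "partial_module sH \<Delta> S sM P"
  shows "to_partial sH \<Delta> S (from_partial sH \<Delta> S sM P) = P"
proof -
  interpret linear_action sM P
    using assms by (rule linear_action_if_partial_module)
  show ?thesis
    by (intro ext) (simp add: to_partial_eq from_partial_cls[OF assms] free_action_fdelta)
qed

context
  fixes sM :: "'k \<Rightarrow> 'm::ab_group_add \<Rightarrow> 'm" and act
  assumes vector_space_sM: "vector_space sM" and act_module: "par_alg_module sH \<Delta> S sM act"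
begin

lemma linear_action_to_partial: "linear_action sM (to_partial sH \<Delta> S act)"
  using vector_space_sM par_alg_moduleD(2)[OF act_module cls_in_Hpar]
  by (simp add: linear_action_def to_partial_eq)

lemma act_cls_fdelta: "act (cls J (fdelta w)) m = foldr (to_partial sH \<Delta> S act) w m"
proof (induct w arbitrary: m)
  case Nil
  show ?case using par_alg_moduleD(6)[OF act_module] by (simp add: qone_def)
next
  case (Cons h w)
  have "cls J (fdelta (h # w)) = qmul J (cls J (fdelta [h])) (cls J (fdelta w))"
    by (simp add: qmul_cls conv_fdelta)
  then show ?case
    using par_alg_moduleD(5)[OF act_module] cls_in_Hpar Cons by (simp add: to_partial_eq)
qed

lemma act_cls:
  assumes "x \<in> Free"
  shows "act (cls J x) m = free_action sM (to_partial sH \<Delta> S act) x m"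
proof -
  have "act (cls J x) m = lsum sM (\<lambda>w. act (cls J (fdelta w)) m) x"
  proof (rule Free_linear_eq_lsum[where \<phi> = "\<lambda>x. act (cls J x) m"])
    show "module sM" using vector_space_sM by (simp add: module_iff_vector_space)
    show "act (cls J (y + z)) m = act (cls J y) m + act (cls J z) m"
      if "y \<in> Free" "z \<in> Free" for y z
      using par_alg_moduleD(3)[OF act_module cls_in_Hpar[OF that(1)] cls_in_Hpar[OF that(2)]] that
      by (simp add: qadd_cls)
    show "act (cls J (fscale c y)) m = sM c (act (cls J y) m)" if "y \<in> Free" for c y
      using par_alg_moduleD(4)[OF act_module cls_in_Hpar[OF that]] that by (simp add: qscale_cls)
  qed fact
  then show ?thesis by (simp add: free_action_def act_cls_fdelta)
qed

lemma partial_module_to_partial: "partial_module sH \<Delta> S sM (to_partial sH \<Delta> S act)"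
  unfolding partial_module_iff_kills_relations[OF vector_space_sH linear_action_to_partial]
proof (intro ballI allI)
  fix r m
  assume "r \<in> linrel sH \<union> parrels \<Delta> S"
  then have r: "r \<in> Free" "r - 0 \<in> J"
    using R_Free by (auto intro: ideal_gen_base)
  have "free_action sM (to_partial sH \<Delta> S act) r m = act (cls J r) m"
    using act_cls[OF r(1)] by simp
  also have "\<dots> = act (cls J 0) m"
    using cls_eq[OF r(1) Free_zero r(2)] by simp
  also have "\<dots> = 0"
    using act_cls[OF Free_zero] by (simp add: free_action_zero)
  finally show "free_action sM (to_partial sH \<Delta> S act) r m = 0" .
qed

lemma from_partial_to_partial: "from_partial sH \<Delta> S sM (to_partial sH \<Delta> S act) = act"
proof (intro ext)
  fix X m
  show "from_partial sH \<Delta> S sM (to_partial sH \<Delta> S act) X m = act X m"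
  proof (cases "X \<in> Hpar sH \<Delta> S")
    case True
    then obtain x where "x \<in> Free" "X = cls J x" unfolding Hpar_eq by blast
    then show ?thesis
      using vector_space_sM partial_module_to_partial by (simp add: from_partial_cls act_cls)
  next
    case False
    then show ?thesis using par_alg_moduleD(1)[OF act_module] by (simp add: from_partial_def)
  qed
qed

end

lemma par_alg_module_hom_iff:
  assumes "vector_space sM" "vector_space sN"
    and "par_alg_module sH \<Delta> S sM act" "par_alg_module sH \<Delta> S sN act'"
  shows "par_alg_module_hom sH \<Delta> S sM sN act act' f
     \<longleftrightarrow> partial_module_hom sM sN (to_partial sH \<Delta> S act) (to_partial sH \<Delta> S act') f"
proof
  assume "par_alg_module_hom sH \<Delta> S sM sN act act' f"
  then show "partial_module_hom sM sN (to_partial sH \<Delta> S act) (to_partial sH \<Delta> S act') f"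
    unfolding par_alg_module_hom_def partial_module_hom_def to_partial_eq
    using cls_in_Hpar by simp
next
  assume hom: "partial_module_hom sM sN (to_partial sH \<Delta> S act) (to_partial sH \<Delta> S act') f"
  have "f (act (cls J x) m) = act' (cls J x) (f m)" if "x \<in> Free" for x m
    using hom that assms by (simp add: act_cls free_action_hom partial_module_hom_def)
  then show "par_alg_module_hom sH \<Delta> S sM sN act act' f"
    using hom unfolding par_alg_module_hom_def partial_module_hom_def Hpar_eq by blast
qed

end

theorem proposition6p6:
  fixes sH :: "'k::field \<Rightarrow> 'h::ring_1 \<Rightarrow> 'h"
    and \<Delta> :: "'h \<Rightarrow> ('h list \<Rightarrow> 'k)" and \<epsilon> :: "'h \<Rightarrow> 'k" and S :: "'h \<Rightarrow> 'h"
    and sM :: "'k \<Rightarrow> 'm::ab_group_add \<Rightarrow> 'm" and sN :: "'k \<Rightarrow> 'n::ab_group_add \<Rightarrow> 'n"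
  assumes "weak_hopf_algebra sH \<Delta> \<epsilon> S"
    and "vector_space sM" and "vector_space sN"
  shows "bij_betw (to_partial sH \<Delta> S)
           {act. par_alg_module sH \<Delta> S sM act} {act. partial_module sH \<Delta> S sM act}
       \<and> (\<forall>act act' f. par_alg_module sH \<Delta> S sM act \<longrightarrow> par_alg_module sH \<Delta> S sN act' \<longrightarrow>
            (par_alg_module_hom sH \<Delta> S sM sN act act' f
             \<longleftrightarrow> partial_module_hom sM sN (to_partial sH \<Delta> S act) (to_partial sH \<Delta> S act') f))"
proof -
  interpret par_quotient sH \<Delta> S
    using assms(1) by (simp add: par_quotient_def weak_hopf_algebra_def)
  have "bij_betw (to_partial sH \<Delta> S)
          {act. par_alg_module sH \<Delta> S sM act} {act. partial_module sH \<Delta> S sM act}"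
    by (rule bij_betw_byWitness[where f' = "from_partial sH \<Delta> S sM"])
      (use assms(2) from_partial_to_partial to_partial_from_partial partial_module_to_partial
         par_alg_module_from_partial in auto)
  then show ?thesis
    using par_alg_module_hom_iff assms(2,3) by blast
qed

end
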